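(* Assume that a Sierpiński set exists. Then there exists a set $A\subseteq\mathbb{R}^2$ such that for every straight line $l\subseteq\mathbb{R}^2$ and every isometry $T:\mathbb{R}\to l$ onto $l$, the set $T^{-1}(A\cap l)$ is a strong Sierpiński subset of $\mathbb{R}$.
   Context: A Sierpiński set is $S\subseteq\mathbb{R}$ with $|S|=\mathfrak{c}$ such that $S\cap N$ is countable for every Lebesgue-null $N\subseteq\mathbb{R}$; it is strong Sierpiński if moreover $S\cap B$ is uncountable for every Borel $B\subseteq\mathbb{R}$ of positive Lebesgue measure. *)

theory Defs
  imports "HOL-Analysis.Analysis" "HOL-Library.Equipollence"
begin

definition sierpinski :: "real set \<Rightarrow> bool" where
  "sierpinski S \<longleftrightarrow> S \<approx> (UNIV :: real set) \<and>
     (\<forall>N \<in> null_sets lebesgue. countable (S \<inter> N))"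

definition strong_sierpinski :: "real set \<Rightarrow> bool" where
  "strong_sierpinski S \<longleftrightarrow> sierpinski S \<and>
     (\<forall>B \<in> sets borel. emeasure lborel B > 0 \<longrightarrow> uncountable (S \<inter> B))"

definition is_line :: "(real^2) set \<Rightarrow> bool" where
  "is_line l \<longleftrightarrow> (\<exists>a v. v \<noteq> 0 \<and> l = {a + t *\<^sub>R v | t. True})"

end

theory Submission
  imports Defs
begin

text \<open>
  Put \<open>X = \<Union>q\<in>\<rat>. q + exp ` S\<close> for a Sierpinski set \<open>S\<close>. It is again Sierpinski, invariant under
  rational translations, and has continuum many points above every bound. Rational translations act
  ergodically: by the Lebesgue density theorem and Vitali's covering theorem, a measurable rationally
  invariant set of positive measure is conull. So the rational saturation of a Borel set \<open>B\<close> of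
  positive measure meets \<open>X\<close> in an uncountable set, and by invariance so does \<open>B\<close>: \<open>X\<close> is strong
  Sierpinski. Take \<open>A = {p. \<parallel>p\<parallel>\<^sup>2 \<in> X}\<close>. Along a line parametrised by an isometry, \<open>\<parallel>p\<parallel>\<^sup>2\<close> is a
  quadratic \<open>(t + \<beta>)\<^sup>2 + \<gamma>\<close>, whose two square-root branches are injective and differentiable; hence
  preimages under it keep countable sets countable and non-null Borel sets non-null, and the preimage
  of \<open>X\<close> is strong Sierpinski.
\<close>

section \<open>Ergodicity of rational translations\<close>

lemma lmeasurable_Int_ball:
  fixes C :: "'a::euclidean_space set"
  assumes "C \<in> sets lebesgue"
  shows "C \<inter> ball x d \<in> lmeasurable"
  using assms
  by (intro bounded_set_imp_lmeasurable) (simp_all add: bounded_Int sets.Int[OF _ fmeasurableD[OF lmeasurable_ball]])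

lemma nonnegligible_imp_positive_lower_density:
  fixes C :: "'a::euclidean_space set"
  assumes C: "C \<in> sets lebesgue" and "\<not> negligible C"
  obtains y r e where "r > 0" "e > 0"
    "\<And>d. 0 < d \<Longrightarrow> d \<le> r \<Longrightarrow> e * measure lebesgue (ball y d) \<le> measure lebesgue (C \<inter> ball y d)"
proof -
  have "\<not> (\<forall>x\<in>C. \<forall>r>0. \<forall>e>0. \<exists>d. 0 < d \<and> d \<le> r \<and> (\<exists>U. C \<inter> ball x d \<subseteq> U \<and>
              U \<in> lmeasurable \<and> measure lebesgue U < e * measure lebesgue (ball x d)))"
    using assms(2) negligible_eq_zero_density[of C] by simp
  then obtain y r e where "r > 0" "e > 0" and small:
    "\<not> (\<exists>d. 0 < d \<and> d \<le> r \<and> (\<exists>U. C \<inter> ball y d \<subseteq> U \<and> U \<in> lmeasurable \<and>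
                              measure lebesgue U < e * measure lebesgue (ball y d)))"
    by blast
  show thesis
  proof (rule that[OF \<open>r > 0\<close> \<open>e > 0\<close>])
    fix d :: real assume "0 < d" "d \<le> r"
    then have "\<not> measure lebesgue (C \<inter> ball y d) < e * measure lebesgue (ball y d)"
      using small lmeasurable_Int_ball[OF C] by blast
    then show "e * measure lebesgue (ball y d) \<le> measure lebesgue (C \<inter> ball y d)"
      by simp
  qed
qed

lemma rational_invariant_uniform_lower_density:
  fixes C :: "real set"
  assumes C: "C \<in> sets lebesgue" and "\<not> negligible C"
    and inv: "\<And>x q. q \<in> \<rat> \<Longrightarrow> x \<in> C \<Longrightarrow> x + q \<in> C"
  obtains r e where "r > 0" "0 < e" "e \<le> 1"
    "\<And>x d. 0 < d \<Longrightarrow> d \<le> r \<Longrightarrow> e * measure lebesgue (ball x d) \<le> measure lebesgue (C \<inter> ball x d)"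
proof -
  obtain r e y where "r > 0" "e > 0" and low:
    "\<And>d. 0 < d \<Longrightarrow> d \<le> r \<Longrightarrow> e * measure lebesgue (ball y d) \<le> measure lebesgue (C \<inter> ball y d)"
    by (rule nonnegligible_imp_positive_lower_density[OF assms(1,2)]) blast
  have "min (e/2) 1 * measure lebesgue (ball x d) \<le> measure lebesgue (C \<inter> ball x d)"
    if d: "0 < d" "d \<le> r" for x d
  proof -
    obtain q where q: "q \<in> \<rat>" "x - y - d/2 < q" "q < x - y + d/2"
      using Rats_dense_in_real[of "x - y - d/2" "x - y + d/2"] \<open>0 < d\<close> by auto
    have sub: "(+) q ` (C \<inter> ball y (d/2)) \<subseteq> C \<inter> ball x d"
    proof (rule image_subsetI)
      fix z assume z: "z \<in> C \<inter> ball y (d/2)"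
      then have "q + z \<in> C"
        using inv[OF q(1), of z] by (simp add: add.commute)
      moreover have "q + z \<in> ball x d"
      proof -
        have "dist y z < d/2"
          using z mem_ball by blast
        then show ?thesis
          using q unfolding mem_ball dist_real_def abs_less_iff by (intro conjI; linarith)
      qed
      ultimately show "q + z \<in> C \<inter> ball x d" by blast
    qed
    have "min (e/2) 1 * measure lebesgue (ball x d) \<le> e * measure lebesgue (ball y (d/2))"
      using d \<open>e > 0\<close> by (simp add: ball_eq_greaterThanLessThan)
    also have "\<dots> \<le> measure lebesgue (C \<inter> ball y (d/2))"
      using low d by simp
    also have "\<dots> = measure lebesgue ((+) q ` (C \<inter> ball y (d/2)))"
      by (simp add: measure_translation)
    also have "\<dots> \<le> measure lebesgue (C \<inter> ball x d)"
      using lmeasurable_Int_ball[OF C]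
      by (intro measure_mono_fmeasurable[OF sub] fmeasurableD measurable_translation) auto
    finally show ?thesis .
  qed
  then show thesis
    using that[OF \<open>r > 0\<close>, of "min (e/2) 1"] \<open>e > 0\<close> by auto
qed

lemma measure_le_if_density_bounded:
  fixes D T :: "'a::euclidean_space set"
  assumes D: "D \<in> lmeasurable" and T: "open T" "T \<in> lmeasurable" "D \<subseteq> T"
    and "0 \<le> c" "r > 0"
    and dens: "\<And>x d. x \<in> D \<Longrightarrow> 0 < d \<Longrightarrow> d \<le> r \<Longrightarrow>
                 measure lebesgue (D \<inter> ball x d) \<le> c * measure lebesgue (ball x d)"
  shows "measure lebesgue D \<le> c * measure lebesgue T"
proof -
  define K where "K = {(x, d). x \<in> D \<and> 0 < d \<and> d \<le> r \<and> ball x d \<subseteq> T}"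
  have "\<exists>i. i \<in> K \<and> x \<in> ball (fst i) (snd i) \<and> snd i < d" if "x \<in> D" "0 < d" for x d
  proof -
    obtain e where "e > 0" "ball x e \<subseteq> T"
      using T \<open>x \<in> D\<close> openE by blast
    then show ?thesis
      using that \<open>r > 0\<close> by (intro exI[of _ "(x, min (d/2) (min e r))"]) (auto simp: K_def)
  qed
  then obtain I where I: "countable I" "I \<subseteq> K"
    and disj: "pairwise (\<lambda>i j. disjnt (ball (fst i) (snd i)) (ball (fst j) (snd j))) I"
    and null: "negligible (D - (\<Union>i\<in>I. ball (fst i) (snd i)))"
    by (rule Vitali_covering_theorem_balls[of D K fst snd])
  define B :: "'a \<times> real \<Rightarrow> 'a set" where "B i = ball (fst i) (snd i)" for i
  have [measurable]: "B i \<in> sets lebesgue" "D \<in> sets lebesgue" for i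
    using D by (auto simp: B_def fmeasurableD)
  have UN: "(\<Union>i\<in>I. B i) \<in> sets lebesgue" "(\<Union>i\<in>I. D \<inter> B i) \<in> sets lebesgue"
    using I(1) by (auto intro!: sets.countable_UN'')
  have disjB: "disjoint_family_on B I" and disjDB: "disjoint_family_on (\<lambda>i. D \<inter> B i) I"
    using disj unfolding disjoint_family_on_def pairwise_def disjnt_def B_def by blast+
  have "emeasure lebesgue D \<le> emeasure lebesgue ((\<Union>i\<in>I. D \<inter> B i) \<union> (D - (\<Union>i\<in>I. B i)))"
    by (intro emeasure_mono sets.Un sets.Diff UN) auto
  also have "\<dots> \<le> emeasure lebesgue (\<Union>i\<in>I. D \<inter> B i) + emeasure lebesgue (D - (\<Union>i\<in>I. B i))"
    by (intro emeasure_subadditive sets.Diff UN) auto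
  also have "emeasure lebesgue (D - (\<Union>i\<in>I. B i)) = 0"
    using null by (simp add: B_def negligible_iff_null_sets null_setsD1)
  also have "emeasure lebesgue (\<Union>i\<in>I. D \<inter> B i) = (\<integral>\<^sup>+i. emeasure lebesgue (D \<inter> B i) \<partial>count_space I)"
    using I(1) disjDB by (intro emeasure_UN_countable) auto
  also have "\<dots> \<le> (\<integral>\<^sup>+i. c * emeasure lebesgue (B i) \<partial>count_space I)"
  proof (intro nn_integral_mono)
    fix i assume "i \<in> space (count_space I)"
    then obtain x d where "i = (x, d)" "x \<in> D" "0 < d" "d \<le> r"
      using I(2) by (auto simp: K_def)
    then have "measure lebesgue (D \<inter> B i) \<le> c * measure lebesgue (B i)"
      using dens by (simp add: B_def)
    then show "emeasure lebesgue (D \<inter> B i) \<le> c * emeasure lebesgue (B i)"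
      using \<open>0 \<le> c\<close> D
      by (simp add: B_def emeasure_eq_measure2 lmeasurable_Int_ball fmeasurableD ennreal_mult[symmetric] ennreal_leI)
  qed
  also have "\<dots> = c * emeasure lebesgue (\<Union>i\<in>I. B i)"
    using I(1) disjB by (simp add: nn_integral_cmult emeasure_UN_countable)
  also have "\<dots> \<le> c * emeasure lebesgue T"
  proof (intro mult_left_mono emeasure_mono)
    show "(\<Union>i\<in>I. B i) \<subseteq> T"
      using I(2) unfolding K_def B_def by fastforce
  qed (use T in \<open>auto simp: fmeasurableD\<close>)
  finally have "emeasure lebesgue D \<le> ennreal (c * measure lebesgue T)"
    using T \<open>0 \<le> c\<close> by (simp add: emeasure_eq_measure2 ennreal_mult)
  then show ?thesis
    using D \<open>0 \<le> c\<close> by (simp add: emeasure_eq_measure2 ennreal_le_iff)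
qed

lemma negligible_if_density_bounded_below_one:
  fixes D :: "'a::euclidean_space set"
  assumes D: "D \<in> sets lebesgue" and "0 \<le> c" "c < 1" "r > 0"
    and dens: "\<And>x d. x \<in> D \<Longrightarrow> 0 < d \<Longrightarrow> d \<le> r \<Longrightarrow>
                 measure lebesgue (D \<inter> ball x d) \<le> c * measure lebesgue (ball x d)"
  shows "negligible D"
proof -
  have "negligible (D \<inter> ball 0 R)" for R
  proof -
    define D' where "D' = D \<inter> ball 0 R"
    have D': "D' \<in> lmeasurable"
      unfolding D'_def by (rule lmeasurable_Int_ball[OF D])
    have dens': "measure lebesgue (D' \<inter> ball x d) \<le> c * measure lebesgue (ball x d)"
      if "x \<in> D'" "0 < d" "d \<le> r" for x d
    proof -
      have "D' \<inter> ball x d \<subseteq> D \<inter> ball x d"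
        by (auto simp: D'_def)
      then have "measure lebesgue (D' \<inter> ball x d) \<le> measure lebesgue (D \<inter> ball x d)"
        by (rule measure_mono_fmeasurable[OF _ fmeasurableD[OF lmeasurable_Int_ball[OF fmeasurableD[OF D']]]
                                           lmeasurable_Int_ball[OF D]])
      then show ?thesis
        using dens[of x d] that by (simp add: D'_def)
    qed
    have eps: "(1 - c) * measure lebesgue D' \<le> e" if "e > 0" for e
    proof -
      obtain T where T: "open T" "D' \<subseteq> T" "T - D' \<in> lmeasurable" "emeasure lebesgue (T - D') < e"
        using sets_lebesgue_outer_open[OF fmeasurableD[OF D'] \<open>e > 0\<close>] by blast
      have TD: "T = (T - D') \<union> D'"
        using T by blast
      have T_meas: "T \<in> lmeasurable"
        by (subst TD) (rule fmeasurable.Un[OF T(3) D'])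
      have "measure lebesgue T \<le> measure lebesgue (T - D') + measure lebesgue D'"
        by (subst TD) (rule measure_Un_le[OF fmeasurableD[OF T(3)] fmeasurableD[OF D']])
      then have "c * measure lebesgue T \<le> c * measure lebesgue (T - D') + c * measure lebesgue D'"
        using \<open>0 \<le> c\<close> by (metis distrib_left mult_left_mono)
      moreover have "c * measure lebesgue (T - D') \<le> measure lebesgue (T - D')"
        using \<open>0 \<le> c\<close> \<open>c < 1\<close> by (intro mult_left_le_one_le) auto
      moreover have "measure lebesgue (T - D') < e"
        using T(3,4) \<open>e > 0\<close> by (simp add: emeasure_eq_measure2 ennreal_less_iff)
      moreover have "measure lebesgue D' \<le> c * measure lebesgue T"
        by (rule measure_le_if_density_bounded[OF D' T(1) T_meas T(2) \<open>0 \<le> c\<close> \<open>r > 0\<close> dens'])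
      ultimately show ?thesis
        by (simp add: left_diff_distrib)
    qed
    have "(1 - c) * measure lebesgue D' \<le> 0"
      by (rule field_le_epsilon) (simp add: eps)
    then have "measure lebesgue D' = 0"
      using \<open>c < 1\<close> by (simp add: mult_le_0_iff measure_le_0_iff)
    then show ?thesis
      using D' by (simp add: D'_def negligible_iff_measure0)
  qed
  then have "negligible (\<Union>n. D \<inter> ball 0 (real n))"
    by (intro negligible_countable_Union) auto
  moreover have "D = (\<Union>n. D \<inter> ball 0 (real n))"
    by (auto simp: dist_norm) (meson reals_Archimedean2)
  ultimately show ?thesis by simp
qed

lemma rational_invariant_conull:
  fixes C :: "real set"
  assumes C: "C \<in> sets lebesgue" and "\<not> negligible C"
    and inv: "\<And>x q. q \<in> \<rat> \<Longrightarrow> x \<in> C \<Longrightarrow> x + q \<in> C"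
  shows "negligible (- C)"
proof -
  obtain r e where "r > 0" "0 < e" "e \<le> 1" and low:
    "\<And>x d. 0 < d \<Longrightarrow> d \<le> r \<Longrightarrow> e * measure lebesgue (ball x d) \<le> measure lebesgue (C \<inter> ball x d)"
    using rational_invariant_uniform_lower_density[OF assms] by blast
  show ?thesis
  proof (rule negligible_if_density_bounded_below_one)
    fix x d :: real assume "0 < d" "d \<le> r"
    have "measure lebesgue (ball x d - C \<inter> ball x d) = measure lebesgue (ball x d) - measure lebesgue (C \<inter> ball x d)"
      by (rule measurable_measure_Diff[OF lmeasurable_ball fmeasurableD[OF lmeasurable_Int_ball[OF C]] Int_lower2])
    moreover have "- C \<inter> ball x d = ball x d - C \<inter> ball x d"
      by blast
    ultimately have "measure lebesgue (- C \<inter> ball x d) = measure lebesgue (ball x d) - measure lebesgue (C \<inter> ball x d)"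
      by (simp only:)
    then show "measure lebesgue (- C \<inter> ball x d) \<le> (1 - e) * measure lebesgue (ball x d)"
      using low[OF \<open>0 < d\<close> \<open>d \<le> r\<close>, of x] by (simp add: algebra_simps)
  qed (use C \<open>r > 0\<close> \<open>0 < e\<close> \<open>e \<le> 1\<close> in \<open>simp_all add: Compl_in_sets_lebesgue\<close>)
qed

section \<open>Strong Sierpinski sets\<close>

lemma negligible_image_real_derivative:
  fixes f :: "real \<Rightarrow> real"
  assumes "negligible N" and deriv: "\<And>x. x \<in> N \<Longrightarrow> (f has_real_derivative f' x) (at x)"
  shows "negligible (f ` N)"
proof (rule negligible_differentiable_image_negligible[OF order_refl \<open>negligible N\<close>])
  show "f differentiable_on N"
    using deriv unfolding differentiable_on_def real_differentiable_def
    by (blast intro: has_field_derivative_at_within)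
qed

lemma negligible_iff_emeasure_lborel_eq_0:
  fixes B :: "'a::euclidean_space set"
  assumes "B \<in> sets borel"
  shows "negligible B \<longleftrightarrow> emeasure lborel B = 0"
  using assms by (simp add: negligible_iff_null_sets null_sets_completion_iff null_sets_def)

lemma strong_sierpinski_iff:
  "strong_sierpinski S \<longleftrightarrow> S \<approx> (UNIV :: real set) \<and> (\<forall>N. negligible N \<longrightarrow> countable (S \<inter> N)) \<and>
     (\<forall>B \<in> sets borel. \<not> negligible B \<longrightarrow> uncountable (S \<inter> B))"
proof -
  have "0 < emeasure lborel B \<longleftrightarrow> \<not> negligible B" if "B \<in> sets borel" for B :: "real set"
    using negligible_iff_emeasure_lborel_eq_0[OF that] by (simp add: zero_less_iff_neq_zero)
  then show ?thesis
    unfolding strong_sierpinski_def sierpinski_def by (auto simp: negligible_iff_null_sets)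
qed

lemma uncountable_Int_if_rational_invariant:
  fixes X B :: "real set"
  assumes null: "\<And>N. negligible N \<Longrightarrow> countable (X \<inter> N)" and "uncountable X"
    and inv: "\<And>x q. q \<in> \<rat> \<Longrightarrow> x \<in> X \<Longrightarrow> x + q \<in> X"
    and B: "B \<in> sets borel" "\<not> negligible B"
  shows "uncountable (X \<inter> B)"
proof
  assume countable_XB: "countable (X \<inter> B)"
  define C where "C = (\<Union>q\<in>\<rat>. (\<lambda>x. x + q) -` B)"
  have "(\<lambda>x. x + q) -` B \<in> sets borel" for q
    using measurable_sets[OF _ B(1), of "\<lambda>x. x + q" borel] by simp
  then have "C \<in> sets borel"
    unfolding C_def by (intro sets.countable_UN'' countable_rat)
  then have C_meas: "C \<in> sets lebesgue"
    by (simp add: sets_completionI_sets)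
  have "B \<subseteq> C"
    unfolding C_def by (auto intro: bexI[of _ 0])
  then have "\<not> negligible C"
    using B(2) negligible_subset by blast
  moreover have "x + q \<in> C" if "q \<in> \<rat>" "x \<in> C" for x q
  proof -
    obtain q' where "q' \<in> \<rat>" "x + q' \<in> B"
      using \<open>x \<in> C\<close> unfolding C_def by blast
    then have "q' - q \<in> \<rat>" "(x + q) + (q' - q) \<in> B"
      using \<open>q \<in> \<rat>\<close> by auto
    then show ?thesis
      unfolding C_def by blast
  qed
  ultimately have "negligible (- C)"
    by (rule rational_invariant_conull[OF C_meas])
  then have "countable (X \<inter> - C)"
    by (rule null)
  moreover have "X \<inter> C \<subseteq> (\<Union>q\<in>\<rat>. (\<lambda>y. y - q) ` (X \<inter> B))"
  proof
    fix x assume "x \<in> X \<inter> C"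
    then obtain q where "q \<in> \<rat>" "x + q \<in> B" "x + q \<in> X"
      using inv unfolding C_def by blast
    then show "x \<in> (\<Union>q\<in>\<rat>. (\<lambda>y. y - q) ` (X \<inter> B))"
      by (auto intro!: bexI[of _ q] image_eqI[of _ _ "x + q"])
  qed
  then have "countable (X \<inter> C)"
    using countable_XB by (rule countable_subset[OF _ countable_UN[OF countable_rat countable_image]])
  ultimately have "countable ((X \<inter> C) \<union> (X \<inter> - C))"
    by simp
  moreover have "(X \<inter> C) \<union> (X \<inter> - C) = X"
    by blast
  ultimately show False
    using \<open>uncountable X\<close> by simp
qed

lemma sierpinski_imp_cofinal_strong_sierpinski:
  assumes "sierpinski S"
  obtains X where "strong_sierpinski X" "\<And>c. (UNIV :: real set) \<lesssim> X \<inter> {c..}"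
proof -
  have S_card: "S \<approx> (UNIV :: real set)" and S_null: "\<And>N. negligible N \<Longrightarrow> countable (S \<inter> N)"
    using assms by (auto simp: sierpinski_def negligible_iff_null_sets)
  define f where "f q s = q + exp s" for q s :: real
  define X where "X = (\<Union>q\<in>\<rat>. f q ` S)"
  have inj_f: "inj (f q)" for q
    by (rule injI) (simp add: f_def)
  have cofinal: "(UNIV :: real set) \<lesssim> X \<inter> {c..}" for c
  proof -
    have "S \<lesssim> X \<inter> {c..}"
      unfolding lepoll_def
    proof (intro exI conjI)
      show "inj_on (f \<lceil>c\<rceil>) S"
        using inj_f by (rule inj_on_subset) simp
      have "f \<lceil>c\<rceil> ` S \<subseteq> X"
        unfolding X_def using Rats_of_int by blast
      moreover have "c \<le> f \<lceil>c\<rceil> s" for s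
        unfolding f_def using le_of_int_ceiling[of c] exp_gt_zero[of s] by linarith
      ultimately show "f \<lceil>c\<rceil> ` S \<subseteq> X \<inter> {c..}"
        by auto
    qed
    then show ?thesis
      using S_card eqpoll_sym eqpoll_imp_lepoll lepoll_trans by blast
  qed
  have null: "countable (X \<inter> N)" if "negligible N" for N
  proof -
    \<comment> \<open>the preimage of N under f q is the image of N under t \<mapsto> ln (t - q)\<close>
    have "negligible ((\<lambda>t. ln (t - q)) ` (N \<inter> {q<..}))" for q
    proof (rule negligible_image_real_derivative[where f'="\<lambda>t. 1 / (t - q)"])
      show "negligible (N \<inter> {q<..})"
        by (rule negligible_subset[OF \<open>negligible N\<close>]) blast
    qed (auto intro!: derivative_eq_intros)
    then have "countable (S \<inter> (\<lambda>t. ln (t - q)) ` (N \<inter> {q<..}))" for q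
      by (rule S_null)
    moreover have "X \<inter> N \<subseteq> (\<Union>q\<in>\<rat>. f q ` (S \<inter> (\<lambda>t. ln (t - q)) ` (N \<inter> {q<..})))"
    proof
      fix x assume "x \<in> X \<inter> N"
      then obtain q s where "q \<in> \<rat>" "s \<in> S" "x = q + exp s" "x \<in> N"
        unfolding X_def f_def by blast
      then have "s \<in> S \<inter> (\<lambda>t. ln (t - q)) ` (N \<inter> {q<..})"
        by (auto intro!: image_eqI[of _ _ x])
      then show "x \<in> (\<Union>q\<in>\<rat>. f q ` (S \<inter> (\<lambda>t. ln (t - q)) ` (N \<inter> {q<..})))"
        using \<open>q \<in> \<rat>\<close> \<open>x = q + exp s\<close> unfolding f_def by blast
    qed
    ultimately show ?thesis
      by (rule countable_subset[OF _ countable_UN[OF countable_rat countable_image], rotated])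
  qed
  have uncountable_X: "uncountable X"
  proof
    assume "countable X"
    then have "countable (UNIV :: real set)"
      using countable_lepoll[OF _ cofinal[of 0]] by blast
    then show False
      using uncountable_UNIV_real by blast
  qed
  have X_invariant: "x + q \<in> X" if "q \<in> \<rat>" "x \<in> X" for x q
  proof -
    obtain q' s where "q' \<in> \<rat>" "s \<in> S" "x = f q' s"
      using \<open>x \<in> X\<close> unfolding X_def by blast
    then have "q' + q \<in> \<rat>" "s \<in> S" "x + q = f (q' + q) s"
      using \<open>q \<in> \<rat>\<close> by (auto simp: f_def)
    then show ?thesis
      unfolding X_def by blast
  qed
  have "uncountable (X \<inter> B)" if "B \<in> sets borel" "\<not> negligible B" for B
    by (rule uncountable_Int_if_rational_invariant[OF null uncountable_X X_invariant that])
  moreover have "X \<approx> (UNIV :: real set)"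
    by (rule lepoll_antisym[OF subset_imp_lepoll[OF subset_UNIV]
                               lepoll_trans[OF cofinal[of 0] subset_imp_lepoll[OF Int_lower1]]])
  ultimately have "strong_sierpinski X"
    using null unfolding strong_sierpinski_iff by blast
  then show thesis
    using cofinal by (rule that)
qed

lemma uncountable_Int_injective_image:
  fixes g :: "real \<Rightarrow> real"
  assumes pos: "\<And>B. B \<in> sets borel \<Longrightarrow> \<not> negligible B \<Longrightarrow> uncountable (X \<inter> B)"
    and U: "U \<in> sets borel" and g_meas: "g \<in> borel_measurable borel" and "inj_on g U"
    and deriv: "\<And>y. y \<in> U \<Longrightarrow> (g has_real_derivative g' y) (at y)"
    and B: "B \<in> sets borel" "\<not> negligible B" "B \<subseteq> g ` U"
  shows "uncountable (g ` (X \<inter> U) \<inter> B)"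
proof
  assume countable_image: "countable (g ` (X \<inter> U) \<inter> B)"
  define E where "E = U \<inter> g -` B"
  have "E \<in> sets borel"
    using measurable_sets[OF g_meas B(1)] U by (simp add: E_def)
  moreover have "\<not> negligible E"
  proof
    assume "negligible E"
    then have "negligible (g ` E)"
      using deriv by (rule negligible_image_real_derivative) (simp add: E_def)
    moreover have "B \<subseteq> g ` E"
      using B(3) by (auto simp: E_def)
    ultimately show False
      using B(2) negligible_subset by blast
  qed
  ultimately have "uncountable (X \<inter> E)"
    by (rule pos)
  moreover have "g ` (X \<inter> E) \<subseteq> g ` (X \<inter> U) \<inter> B"
    by (auto simp: E_def)
  then have "countable (g ` (X \<inter> E))"
    using countable_image by (rule countable_subset)
  then have "countable (X \<inter> E)"
    by (rule countable_image_inj_on) (rule inj_on_subset[OF \<open>inj_on g U\<close>], auto simp: E_def)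
  ultimately show False
    by blast
qed

lemma sqrt_branch_of_quadratic:
  fixes t \<beta> \<sigma> :: real
  assumes "\<sigma> \<in> {-1, 1}" "0 \<le> \<sigma> * (t + \<beta>)"
  shows "\<sigma> * sqrt ((t + \<beta>)^2) - \<beta> = t"
  using assms by (auto simp: abs_if mult_le_0_iff)

lemma quadratic_of_sqrt_branch:
  fixes y \<gamma> \<sigma> :: real
  assumes "\<sigma> \<in> {-1, 1}" "\<gamma> \<le> y"
  shows "(\<sigma> * sqrt (y - \<gamma>))^2 + \<gamma> = y"
  using assms by (auto simp: power_mult_distrib)

lemma inj_on_sqrt_branch:
  fixes \<beta> \<gamma> \<sigma> :: real
  assumes "\<sigma> \<in> {-1, 1}"
  shows "inj_on (\<lambda>y. \<sigma> * sqrt (y - \<gamma>) - \<beta>) {\<gamma>..}"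
  by (rule inj_on_inverseI[where g="\<lambda>t. (t + \<beta>)^2 + \<gamma>"]) (use quadratic_of_sqrt_branch[OF assms] in auto)

lemma countable_vimage_quadratic:
  fixes \<beta> \<gamma> :: real
  assumes "countable Y"
  shows "countable {t. (t + \<beta>)^2 + \<gamma> \<in> Y}"
proof (rule countable_subset)
  let ?k = "\<lambda>\<sigma> y. \<sigma> * sqrt (y - \<gamma>) - \<beta>"
  show "{t. (t + \<beta>)^2 + \<gamma> \<in> Y} \<subseteq> ?k 1 ` Y \<union> ?k (-1) ` Y"
  proof
    fix t assume t: "t \<in> {t. (t + \<beta>)^2 + \<gamma> \<in> Y}"
    have "t = ?k 1 ((t + \<beta>)^2 + \<gamma>) \<or> t = ?k (-1) ((t + \<beta>)^2 + \<gamma>)"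
      using sqrt_branch_of_quadratic[of 1 t \<beta>] sqrt_branch_of_quadratic[of "-1" t \<beta>] by fastforce
    then show "t \<in> ?k 1 ` Y \<union> ?k (-1) ` Y"
      using t by blast
  qed
  show "countable (?k 1 ` Y \<union> ?k (-1) ` Y)"
    using assms by simp
qed

lemma uncountable_Int_vimage_quadratic:
  fixes \<beta> \<gamma> :: real
  assumes pos: "\<And>B. B \<in> sets borel \<Longrightarrow> \<not> negligible B \<Longrightarrow> uncountable (X \<inter> B)"
    and B: "B \<in> sets borel" "\<not> negligible B"
  shows "uncountable ({t. (t + \<beta>)^2 + \<gamma> \<in> X} \<inter> B)"
proof -
  let ?B = "\<lambda>\<sigma>. B \<inter> {t. 0 < \<sigma> * (t + \<beta>)}"
  let ?k = "\<lambda>\<sigma> y. \<sigma> * sqrt (y - \<gamma>) - \<beta>"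
  obtain \<sigma> :: real where \<sigma>: "\<sigma> \<in> {-1, 1}" and nonnegligible: "\<not> negligible (?B \<sigma>)"
  proof -
    have "B \<subseteq> ?B 1 \<union> ?B (-1) \<union> {- \<beta>}"
      by auto
    moreover have "negligible (?B 1 \<union> ?B (-1) \<union> {- \<beta>})"
      if "negligible (?B 1)" "negligible (?B (-1))"
      using that by (intro negligible_Un) auto
    ultimately show thesis
      using B(2) negligible_subset that[of 1] that[of "-1"] by blast
  qed
  have "uncountable (?k \<sigma> ` (X \<inter> {\<gamma><..}) \<inter> ?B \<sigma>)"
  proof (rule uncountable_Int_injective_image[OF pos])
    show "?k \<sigma> \<in> borel_measurable borel"
      by (intro borel_measurable_continuous_onI continuous_intros)
    show "inj_on (?k \<sigma>) {\<gamma><..}"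
      using inj_on_sqrt_branch[OF \<sigma>] by (rule inj_on_subset) auto
    show "(?k \<sigma> has_real_derivative \<sigma> / (2 * sqrt (y - \<gamma>))) (at y)" if "y \<in> {\<gamma><..}" for y
      using that by (auto intro!: derivative_eq_intros simp: divide_simps)
    show "?B \<sigma> \<subseteq> ?k \<sigma> ` {\<gamma><..}"
    proof
      fix t assume t: "t \<in> ?B \<sigma>"
      then have "t = ?k \<sigma> ((t + \<beta>)^2 + \<gamma>)"
        using sqrt_branch_of_quadratic[OF \<sigma>, of t \<beta>] by simp
      moreover have "(t + \<beta>)^2 + \<gamma> \<in> {\<gamma><..}"
        using t by auto
      ultimately show "t \<in> ?k \<sigma> ` {\<gamma><..}"
        by blast
    qed
    show "?B \<sigma> \<in> sets borel"
      using B(1) by measurable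
  qed (use nonnegligible in auto)
  moreover have "?k \<sigma> ` (X \<inter> {\<gamma><..}) \<inter> ?B \<sigma> \<subseteq> {t. (t + \<beta>)^2 + \<gamma> \<in> X} \<inter> B"
    using quadratic_of_sqrt_branch[OF \<sigma>] by auto
  ultimately show ?thesis
    using countable_subset by blast
qed

lemma strong_sierpinski_vimage_quadratic:
  fixes \<beta> \<gamma> :: real
  assumes X: "strong_sierpinski X" and cofinal: "\<And>c. (UNIV :: real set) \<lesssim> X \<inter> {c..}"
  shows "strong_sierpinski {t. (t + \<beta>)^2 + \<gamma> \<in> X}"
proof -
  let ?W = "{t. (t + \<beta>)^2 + \<gamma> \<in> X}"
  have null: "countable (X \<inter> N)" if "negligible N" for N
    using X that unfolding strong_sierpinski_iff by blast
  have pos: "uncountable (X \<inter> B)" if "B \<in> sets borel" "\<not> negligible B" for B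
    using X that unfolding strong_sierpinski_iff by blast
  have "X \<inter> {\<gamma>..} \<lesssim> ?W"
    unfolding lepoll_def
  proof (intro exI conjI)
    show "inj_on (\<lambda>y. sqrt (y - \<gamma>) - \<beta>) (X \<inter> {\<gamma>..})"
      using inj_on_sqrt_branch[where \<sigma>=1 and \<gamma>=\<gamma> and \<beta>=\<beta>, simplified] by (rule inj_on_subset) auto
    show "(\<lambda>y. sqrt (y - \<gamma>) - \<beta>) ` (X \<inter> {\<gamma>..}) \<subseteq> ?W"
      using quadratic_of_sqrt_branch[where \<sigma>=1 and \<gamma>=\<gamma>] by auto
  qed
  then have "?W \<approx> (UNIV :: real set)"
    by (rule lepoll_antisym[OF subset_imp_lepoll[OF subset_UNIV] lepoll_trans[OF cofinal]])
  moreover have "countable (?W \<inter> N)" if "negligible N" for N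
  proof -
    have "negligible ((\<lambda>t. (t + \<beta>)^2 + \<gamma>) ` N)"
      using \<open>negligible N\<close> by (rule negligible_image_real_derivative) (auto intro!: derivative_eq_intros)
    then have "countable {t. (t + \<beta>)^2 + \<gamma> \<in> X \<inter> (\<lambda>t. (t + \<beta>)^2 + \<gamma>) ` N}"
      by (intro countable_vimage_quadratic null)
    then show ?thesis
      by (rule countable_subset[rotated]) auto
  qed
  moreover have "uncountable (?W \<inter> B)" if "B \<in> sets borel" "\<not> negligible B" for B
    using pos that by (rule uncountable_Int_vimage_quadratic)
  ultimately show ?thesis
    unfolding strong_sierpinski_iff by blast
qed

section \<open>Lines in the plane\<close>

lemma isometry_of_real_line_affine:
  fixes T :: "real \<Rightarrow> 'a::real_inner"
  assumes iso: "\<And>x y. dist (T x) (T y) = dist x y"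
  shows "T t = T 0 + t *\<^sub>R (T 1 - T 0)"
proof -
  define u w where "u = T t - T 0" and "w = T 1 - T 0"
  have "norm w = 1" "norm u = \<bar>t\<bar>" "norm (u - w) = \<bar>t - 1\<bar>"
    using iso[of 1 0] iso[of t 0] iso[of t 1] by (simp_all add: u_def w_def dist_norm)
  moreover have "(norm (u - w))^2 = (norm u)^2 - 2 * (u \<bullet> w) + (norm w)^2"
    by (simp add: power2_norm_eq_inner inner_diff_left inner_diff_right inner_commute)
  ultimately have "u \<bullet> w = t"
    by (simp add: power2_eq_square algebra_simps)
  have "(norm (u - t *\<^sub>R w))^2 = (norm u)^2 - 2 * t * (u \<bullet> w) + t^2 * (norm w)^2"
    by (simp only: power2_norm_eq_inner)
       (simp add: inner_diff_left inner_diff_right inner_commute algebra_simps power2_eq_square)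
  also have "\<dots> = 0"
    using \<open>norm w = 1\<close> \<open>norm u = \<bar>t\<bar>\<close> \<open>u \<bullet> w = t\<close> by (simp add: power2_eq_square)
  finally have "u = t *\<^sub>R w"
    by simp
  then show ?thesis
    by (simp add: u_def w_def algebra_simps)
qed

lemma norm_on_line_squared:
  fixes a w :: "'a::real_inner"
  assumes "norm w = 1"
  shows "(norm (a + t *\<^sub>R w))^2 = (t + a \<bullet> w)^2 + ((norm a)^2 - (a \<bullet> w)^2)"
proof -
  have "(norm (a + t *\<^sub>R w))^2 = (norm a)^2 + 2 * t * (a \<bullet> w) + t^2 * (norm w)^2"
    by (simp only: power2_norm_eq_inner)
       (simp add: inner_add_left inner_add_right inner_commute algebra_simps power2_eq_square)
  then show ?thesis
    using assms by (simp add: power2_eq_square algebra_simps)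
qed

theorem mainTheorem10:
  assumes "\<exists>S :: real set. sierpinski S"
  shows "\<exists>A :: (real^2) set. \<forall>l T. is_line l \<and> (\<forall>x y. dist (T x) (T y) = dist x y) \<and> range T = l
           \<longrightarrow> strong_sierpinski (T -` (A \<inter> l))"
proof -
  obtain X where X: "strong_sierpinski X" and cofinal: "\<And>c. (UNIV :: real set) \<lesssim> X \<inter> {c..}"
    using assms sierpinski_imp_cofinal_strong_sierpinski by metis
  define A :: "(real^2) set" where "A = {p. (norm p)^2 \<in> X}"
  have "strong_sierpinski (T -` (A \<inter> l))"
    if iso: "\<forall>x y. dist (T x) (T y) = dist x y" and "range T = l" for l and T :: "real \<Rightarrow> real^2"
  proof -
    define a w where "a = T 0" and "w = T 1 - T 0"
    have "norm w = 1"
      using iso by (simp add: w_def dist_norm norm_minus_commute)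
    have "T t = a + t *\<^sub>R w" for t
      unfolding a_def w_def by (rule isometry_of_real_line_affine) (use iso in blast)
    then have "T -` (A \<inter> l) = {t. (norm (a + t *\<^sub>R w))^2 \<in> X}"
      using \<open>range T = l\<close> by (auto simp: A_def)
    also have "\<dots> = {t. (t + a \<bullet> w)^2 + ((norm a)^2 - (a \<bullet> w)^2) \<in> X}"
      by (simp only: norm_on_line_squared[OF \<open>norm w = 1\<close>])
    finally show ?thesis
      using strong_sierpinski_vimage_quadratic[OF X cofinal] by simp
  qed
  then show ?thesis
    by blast
qed

end
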